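(* Let $\mathcal{C},\mathcal{D}$ be generalized categories and $F:\mathcal{C}\to\mathcal{D}$, $G:\mathcal{D}\to\mathcal{C}$ functors. The following are equivalent: (1) there are natural transformations $\eta:\mathrm{id}_{\mathcal{C}}\Rightarrow G\circ F$ and $\varepsilon:F\circ G\Rightarrow \mathrm{id}_{\mathcal{D}}$ such that $(F,G,\eta,\varepsilon)$ is an adjunction, i.e. $G(\varepsilon(y))\cdot\eta(G(y)) = 1_{G(y)}$ for all $y\in\mathcal{D}$ and $\varepsilon(F(x))\cdot F(\eta(x)) = 1_{F(x)}$ for all $x\in\mathcal{C}$; (2) for every $f\in\mathcal{C}$ and $g\in\mathcal{D}$ there is a bijection $\phi_{f,g}:\hom(F(f),g)\to\hom(f,G(g))$ which is natural in $f$ and $g$, meaning: for all $f,f'\in\mathcal{C}$, $g\in\mathcal{D}$, $v\in\hom(f,f')$, $u\in\hom(F(f'),g)$ with $u\cdot F(v)$ defined, $\phi_{f,g}(u\cdot F(v))=\phi_{f',g}(u)\cdot v$; and for all $f\in\mathcal{C}$, $g,g'\in\mathcal{D}$, $v\in\hom(F(f),g)$, $v'\in\hom(g,g')$ with $v'\cdot v$ defined, $\phi_{f,g'}(v'\cdot v)=G(v')\cdot\phi_{f,g}(v)$.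
   Context: A generalized category is a tuple $(\mathcal{C},\le,s,t,\cdot)$ where $\mathcal{C}$ is a set, $\le$ a relation on $\mathcal{C}$, $s,t:\mathcal{C}\to\mathcal{C}$ maps (write $\bar a = s(a)$, $\hat a = t(a)$), and $\cdot$ a partially defined binary operation (write $ab$), such that: (1) $\le$ is a partial order; (2) $ab$ is defined iff $s(a)\le t(b)$; (3) if $(ab)c$ or $a(bc)$ is defined then $(ab)c=a(bc)$; (4) if $ab$ is defined then $s(ab)=s(b)$ and $t(ab)=t(a)$; (5) for every $a$ there is $b$ with $s(b)=t(b)=a$ such that $bc=c$ whenever $bc$ is defined and $cb=c$ whenever $cb$ is defined; this $b$ is unique, denoted $1_a$; (6) if $s(a)=t(a)=a$ then $ba=b$ whenever $ba$ is defined and $ab=b$ whenever $ab$ is defined; (7) if $a\le b$ then $s(a)\le s(b)$, $t(a)\le t(b)$ and $1_a\le 1_b$; and if $a\le b$, $c\le d$ and $ac,bd$ are defined then $ac\le bd$. $\hom(a,b)=\{c\in\mathcal{C}:\bar c=a,\hat c=b\}$. A functor $F:\mathcal{C}\to\mathcal{D}$ is a map with $a\le b\Rightarrow F(a)\le F(b)$, $F(\bar a)=\overline{F(a)}$, $F(\hat a)=\widehat{F(a)}$, $F(ab)=F(a)F(b)$ whenever $ab$ is defined, and $F(1_a)=1_{F(a)}$. For functors $F,G:\mathcal{C}\to\mathcal{D}$, a natural transformation $F\Rightarrow G$ is a pair $(\theta_1,\theta_2)$ of maps $\mathcal{C}\to\mathcal{D}$ such that for all $a$, $\theta_1(a)F(a)$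 and $G(a)\theta_2(a)$ are defined and equal, $\theta_1(a)=\theta_1(b)$ whenever $\hat a=\hat b$, and $\theta_2(a)=\theta_2(b)$ whenever $\bar a=\bar b$; it is identified with the map $\theta(x):=\theta_1(1_x)$ ($=\theta_2(1_x)$), which satisfies $\theta(\hat f)\cdot F(f)=G(f)\cdot\theta(\bar f)$. *)

theory Defs
  imports Main
begin

text \<open>A generalized category: carrier, order, source, target and a composition that is
  only meaningful when defined (i.e. when src a \<le> tgt b).\<close>

record 'a gcat =
  gc_carrier :: "'a set"
  gc_le :: "'a \<Rightarrow> 'a \<Rightarrow> bool"
  gc_src :: "'a \<Rightarrow> 'a"
  gc_tgt :: "'a \<Rightarrow> 'a"
  gc_comp :: "'a \<Rightarrow> 'a \<Rightarrow> 'a"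

definition gc_defd :: "'a gcat \<Rightarrow> 'a \<Rightarrow> 'a \<Rightarrow> bool" where
  "gc_defd C a b \<longleftrightarrow> gc_le C (gc_src C a) (gc_tgt C b)"

definition gc_is_unit :: "'a gcat \<Rightarrow> 'a \<Rightarrow> 'a \<Rightarrow> bool" where
  "gc_is_unit C a b \<longleftrightarrow> b \<in> gc_carrier C \<and> gc_src C b = a \<and> gc_tgt C b = a \<and>
     (\<forall>c\<in>gc_carrier C. gc_defd C b c \<longrightarrow> gc_comp C b c = c) \<and>
     (\<forall>c\<in>gc_carrier C. gc_defd C c b \<longrightarrow> gc_comp C c b = c)"

text \<open>The identity 1_a (unique when it exists, by axiom (5) and reflexivity).\<close>
definition gc_ident :: "'a gcat \<Rightarrow> 'a \<Rightarrow> 'a" where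
  "gc_ident C a = (SOME b. gc_is_unit C a b)"

definition gc_hom :: "'a gcat \<Rightarrow> 'a \<Rightarrow> 'a \<Rightarrow> 'a set" where
  "gc_hom C a b = {c \<in> gc_carrier C. gc_src C c = a \<and> gc_tgt C c = b}"

definition gen_cat :: "'a gcat \<Rightarrow> bool" where
  "gen_cat C \<longleftrightarrow>
    \<comment> \<open>closure of the carrier\<close>
    (\<forall>a\<in>gc_carrier C. gc_src C a \<in> gc_carrier C \<and> gc_tgt C a \<in> gc_carrier C) \<and>
    (\<forall>a\<in>gc_carrier C. \<forall>b\<in>gc_carrier C. gc_defd C a b \<longrightarrow> gc_comp C a b \<in> gc_carrier C) \<and>
    \<comment> \<open>(1) partial order on the carrier\<close>
    (\<forall>a b. gc_le C a b \<longrightarrow> a \<in> gc_carrier C \<and> b \<in> gc_carrier C) \<and>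
    (\<forall>a\<in>gc_carrier C. gc_le C a a) \<and>
    (\<forall>a\<in>gc_carrier C. \<forall>b\<in>gc_carrier C. gc_le C a b \<and> gc_le C b a \<longrightarrow> a = b) \<and>
    (\<forall>a\<in>gc_carrier C. \<forall>b\<in>gc_carrier C. \<forall>c\<in>gc_carrier C.
        gc_le C a b \<and> gc_le C b c \<longrightarrow> gc_le C a c) \<and>
    \<comment> \<open>(3) associativity: if either side is defined, both are and they agree\<close>
    (\<forall>a\<in>gc_carrier C. \<forall>b\<in>gc_carrier C. \<forall>c\<in>gc_carrier C.
        ((gc_defd C a b \<and> gc_defd C (gc_comp C a b) c) \<or>
         (gc_defd C b c \<and> gc_defd C a (gc_comp C b c))) \<longrightarrow>
        gc_defd C a b \<and> gc_defd C (gc_comp C a b) c \<and>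
        gc_defd C b c \<and> gc_defd C a (gc_comp C b c) \<and>
        gc_comp C (gc_comp C a b) c = gc_comp C a (gc_comp C b c)) \<and>
    \<comment> \<open>(4)\<close>
    (\<forall>a\<in>gc_carrier C. \<forall>b\<in>gc_carrier C. gc_defd C a b \<longrightarrow>
        gc_src C (gc_comp C a b) = gc_src C b \<and> gc_tgt C (gc_comp C a b) = gc_tgt C a) \<and>
    \<comment> \<open>(5)\<close>
    (\<forall>a\<in>gc_carrier C. \<exists>b. gc_is_unit C a b) \<and>
    \<comment> \<open>(6)\<close>
    (\<forall>a\<in>gc_carrier C. gc_src C a = a \<and> gc_tgt C a = a \<longrightarrow>
        (\<forall>b\<in>gc_carrier C. gc_defd C b a \<longrightarrow> gc_comp C b a = b) \<and>
        (\<forall>b\<in>gc_carrier C. gc_defd C a b \<longrightarrow> gc_comp C a b = b)) \<and>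
    \<comment> \<open>(7)\<close>
    (\<forall>a\<in>gc_carrier C. \<forall>b\<in>gc_carrier C. gc_le C a b \<longrightarrow>
        gc_le C (gc_src C a) (gc_src C b) \<and> gc_le C (gc_tgt C a) (gc_tgt C b) \<and>
        gc_le C (gc_ident C a) (gc_ident C b)) \<and>
    (\<forall>a\<in>gc_carrier C. \<forall>b\<in>gc_carrier C. \<forall>c\<in>gc_carrier C. \<forall>d\<in>gc_carrier C.
        gc_le C a b \<and> gc_le C c d \<and> gc_defd C a c \<and> gc_defd C b d \<longrightarrow>
        gc_le C (gc_comp C a c) (gc_comp C b d))"

definition gc_functor :: "'a gcat \<Rightarrow> 'b gcat \<Rightarrow> ('a \<Rightarrow> 'b) \<Rightarrow> bool" where
  "gc_functor C D F \<longleftrightarrow>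
    (\<forall>a\<in>gc_carrier C. F a \<in> gc_carrier D) \<and>
    (\<forall>a\<in>gc_carrier C. \<forall>b\<in>gc_carrier C. gc_le C a b \<longrightarrow> gc_le D (F a) (F b)) \<and>
    (\<forall>a\<in>gc_carrier C. F (gc_src C a) = gc_src D (F a) \<and> F (gc_tgt C a) = gc_tgt D (F a)) \<and>
    (\<forall>a\<in>gc_carrier C. \<forall>b\<in>gc_carrier C. gc_defd C a b \<longrightarrow>
        F (gc_comp C a b) = gc_comp D (F a) (F b)) \<and>
    (\<forall>a\<in>gc_carrier C. F (gc_ident C a) = gc_ident D (F a))"

definition gc_nat_trans :: "'a gcat \<Rightarrow> 'b gcat \<Rightarrow> ('a \<Rightarrow> 'b) \<Rightarrow> ('a \<Rightarrow> 'b)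
    \<Rightarrow> ('a \<Rightarrow> 'b) \<Rightarrow> ('a \<Rightarrow> 'b) \<Rightarrow> bool" where
  "gc_nat_trans C D F G \<theta>1 \<theta>2 \<longleftrightarrow>
    (\<forall>a\<in>gc_carrier C. \<theta>1 a \<in> gc_carrier D \<and> \<theta>2 a \<in> gc_carrier D \<and>
        gc_defd D (\<theta>1 a) (F a) \<and> gc_defd D (G a) (\<theta>2 a) \<and>
        gc_comp D (\<theta>1 a) (F a) = gc_comp D (G a) (\<theta>2 a)) \<and>
    (\<forall>a\<in>gc_carrier C. \<forall>b\<in>gc_carrier C. gc_tgt C a = gc_tgt C b \<longrightarrow> \<theta>1 a = \<theta>1 b) \<and>
    (\<forall>a\<in>gc_carrier C. \<forall>b\<in>gc_carrier C. gc_src C a = gc_src C b \<longrightarrow> \<theta>2 a = \<theta>2 b)"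

definition gc_nt_val :: "'a gcat \<Rightarrow> ('a \<Rightarrow> 'b) \<Rightarrow> 'a \<Rightarrow> 'b" where
  "gc_nt_val C \<theta>1 x = \<theta>1 (gc_ident C x)"

end

theory Submission
  imports Defs
begin

text \<open>Composition of hom-compatible arrows is always defined (by reflexivity of \<open>\<le>\<close>), and a
  natural transformation is determined by its components \<open>\<theta>(x) = \<theta>\<^sub>1(1\<^sub>x)\<close>, so the classical
  argument goes through. From an adjunction, \<open>u \<mapsto> G u \<cdot> \<eta>(f)\<close> is a natural bijection with
  inverse \<open>w \<mapsto> \<epsilon>(g) \<cdot> F w\<close>, by naturality and the triangle identities. Conversely, from \<open>\<phi>\<close>
  take \<open>\<eta>(x) = \<phi>(1\<^bsub>F x\<^esub>)\<close> and \<open>\<epsilon>(y) = \<phi>\<^sup>-\<^sup>1(1\<^bsub>G y\<^esub>)\<close>; naturality of \<open>\<phi>\<close> in \<open>g\<close> gives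
  \<open>\<phi>(u) = G u \<cdot> \<eta>(f)\<close>, and the remaining identities follow by injectivity of \<open>\<phi>\<close>.\<close>

lemma
  assumes "gen_cat C"
  shows gc_src_closed: "a \<in> gc_carrier C \<Longrightarrow> gc_src C a \<in> gc_carrier C"
    and gc_tgt_closed: "a \<in> gc_carrier C \<Longrightarrow> gc_tgt C a \<in> gc_carrier C"
    and gc_le_refl: "a \<in> gc_carrier C \<Longrightarrow> gc_le C a a"
    and gc_comp_closed:
      "\<lbrakk>a \<in> gc_carrier C; b \<in> gc_carrier C; gc_defd C a b\<rbrakk> \<Longrightarrow> gc_comp C a b \<in> gc_carrier C"
    and gc_src_comp:
      "\<lbrakk>a \<in> gc_carrier C; b \<in> gc_carrier C; gc_defd C a b\<rbrakk> \<Longrightarrow> gc_src C (gc_comp C a b) = gc_src C b"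
    and gc_tgt_comp:
      "\<lbrakk>a \<in> gc_carrier C; b \<in> gc_carrier C; gc_defd C a b\<rbrakk> \<Longrightarrow> gc_tgt C (gc_comp C a b) = gc_tgt C a"
    and gc_comp_assoc:
      "\<lbrakk>a \<in> gc_carrier C; b \<in> gc_carrier C; c \<in> gc_carrier C; gc_defd C a b;
        gc_defd C (gc_comp C a b) c\<rbrakk> \<Longrightarrow> gc_comp C (gc_comp C a b) c = gc_comp C a (gc_comp C b c)"
    and gc_unit_exists: "a \<in> gc_carrier C \<Longrightarrow> \<exists>b. gc_is_unit C a b"
  using assms unfolding gen_cat_def by (elim conjE; meson)+

lemma gc_ident_is_unit: "gen_cat C \<Longrightarrow> a \<in> gc_carrier C \<Longrightarrow> gc_is_unit C a (gc_ident C a)"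
  unfolding gc_ident_def by (rule someI_ex) (rule gc_unit_exists)

lemma gc_homD:
  assumes "c \<in> gc_hom C x y"
  shows "c \<in> gc_carrier C" "gc_src C c = x" "gc_tgt C c = y"
  using assms unfolding gc_hom_def by simp_all

lemma gc_hom_src_tgt: "c \<in> gc_carrier C \<Longrightarrow> c \<in> gc_hom C (gc_src C c) (gc_tgt C c)"
  unfolding gc_hom_def by simp

lemma gc_defd_hom:
  assumes "gen_cat C" "a \<in> gc_hom C y z" "b \<in> gc_hom C x y"
  shows "gc_defd C a b"
  using gc_le_refl[OF assms(1) gc_src_closed[OF assms(1) gc_homD(1)[OF assms(2)]]] assms(2,3)
  by (simp add: gc_defd_def gc_homD)

lemma gc_comp_hom:
  assumes "gen_cat C" "a \<in> gc_hom C y z" "b \<in> gc_hom C x y"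
  shows "gc_comp C a b \<in> gc_hom C x z"
  using assms gc_defd_hom[OF assms]
  by (auto simp: gc_hom_def gc_comp_closed gc_src_comp gc_tgt_comp)

lemma gc_comp_assoc_hom:
  assumes "gen_cat C" "a \<in> gc_hom C z w" "b \<in> gc_hom C y z" "c \<in> gc_hom C x y"
  shows "gc_comp C (gc_comp C a b) c = gc_comp C a (gc_comp C b c)"
proof (rule gc_comp_assoc)
  show "gc_defd C a b" using gc_defd_hom[OF assms(1-3)] .
  show "gc_defd C (gc_comp C a b) c" using gc_defd_hom[OF assms(1) gc_comp_hom[OF assms(1-3)] assms(4)] .
qed (use assms gc_homD(1) in auto)

lemma gc_ident_hom: "gen_cat C \<Longrightarrow> x \<in> gc_carrier C \<Longrightarrow> gc_ident C x \<in> gc_hom C x x"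
  using gc_ident_is_unit[of C x] unfolding gc_is_unit_def gc_hom_def by simp

lemma
  assumes "gen_cat C" "x \<in> gc_carrier C" "c \<in> gc_carrier C"
  shows gc_comp_ident_left: "gc_defd C (gc_ident C x) c \<Longrightarrow> gc_comp C (gc_ident C x) c = c"
    and gc_comp_ident_right: "gc_defd C c (gc_ident C x) \<Longrightarrow> gc_comp C c (gc_ident C x) = c"
  using gc_ident_is_unit[OF assms(1,2)] assms(3) unfolding gc_is_unit_def by simp_all

lemma gc_comp_ident_hom_left:
  assumes "gen_cat C" "c \<in> gc_hom C x y"
  shows "gc_comp C (gc_ident C y) c = c"
proof (rule gc_comp_ident_left[OF assms(1)])
  show y: "y \<in> gc_carrier C" using gc_tgt_closed[OF assms(1) gc_homD(1)] gc_homD(3) assms(2) by metis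
  show "gc_defd C (gc_ident C y) c" using gc_defd_hom[OF assms(1) gc_ident_hom[OF assms(1) y] assms(2)] .
qed (rule gc_homD(1)[OF assms(2)])

lemma gc_comp_ident_hom_right:
  assumes "gen_cat C" "c \<in> gc_hom C x y"
  shows "gc_comp C c (gc_ident C x) = c"
proof (rule gc_comp_ident_right[OF assms(1)])
  show x: "x \<in> gc_carrier C" using gc_src_closed[OF assms(1) gc_homD(1)] gc_homD(2) assms(2) by metis
  show "gc_defd C c (gc_ident C x)" using gc_defd_hom[OF assms(1) assms(2) gc_ident_hom[OF assms(1) x]] .
qed (rule gc_homD(1)[OF assms(2)])

lemma
  assumes "gc_functor C D F"
  shows gc_functor_closed: "a \<in> gc_carrier C \<Longrightarrow> F a \<in> gc_carrier D"
    and gc_functor_mono: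
      "\<lbrakk>a \<in> gc_carrier C; b \<in> gc_carrier C; gc_le C a b\<rbrakk> \<Longrightarrow> gc_le D (F a) (F b)"
    and gc_functor_src: "a \<in> gc_carrier C \<Longrightarrow> F (gc_src C a) = gc_src D (F a)"
    and gc_functor_tgt: "a \<in> gc_carrier C \<Longrightarrow> F (gc_tgt C a) = gc_tgt D (F a)"
    and gc_functor_comp:
      "\<lbrakk>a \<in> gc_carrier C; b \<in> gc_carrier C; gc_defd C a b\<rbrakk> \<Longrightarrow>
        F (gc_comp C a b) = gc_comp D (F a) (F b)"
    and gc_functor_ident: "a \<in> gc_carrier C \<Longrightarrow> F (gc_ident C a) = gc_ident D (F a)"
  using assms unfolding gc_functor_def by simp_all

lemma gc_functor_hom: "gc_functor C D F \<Longrightarrow> c \<in> gc_hom C x y \<Longrightarrow> F c \<in> gc_hom D (F x) (F y)"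
  unfolding gc_hom_def by (auto simp: gc_functor_closed gc_functor_src gc_functor_tgt)

lemma gc_functor_defd:
  assumes "gen_cat C" "gc_functor C D F" "a \<in> gc_carrier C" "b \<in> gc_carrier C" "gc_defd C a b"
  shows "gc_defd D (F a) (F b)"
  using assms gc_functor_mono[OF assms(2), of "gc_src C a" "gc_tgt C b"]
  by (simp add: gc_defd_def gc_src_closed gc_tgt_closed gc_functor_src gc_functor_tgt)

lemma gc_functor_comp_hom:
  assumes "gen_cat C" "gc_functor C D F" "a \<in> gc_hom C y z" "b \<in> gc_hom C x y"
  shows "F (gc_comp C a b) = gc_comp D (F a) (F b)"
  using gc_functor_comp[OF assms(2) gc_homD(1)[OF assms(3)] gc_homD(1)[OF assms(4)]
      gc_defd_hom[OF assms(1,3,4)]] .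

lemma gc_functor_id: "gc_functor C C id"
  unfolding gc_functor_def by simp

lemma gc_functor_compose:
  assumes "gen_cat C" "gc_functor C D F" "gc_functor D E G"
  shows "gc_functor C E (G \<circ> F)"
  using assms gc_functor_defd[OF assms(1,2)]
  unfolding gc_functor_def[of C E]
  by (auto simp: gc_functor_closed gc_functor_mono gc_functor_src gc_functor_tgt
      gc_functor_comp gc_functor_ident)

text \<open>Natural transformations by their components; the pair \<open>(\<theta>\<^sub>1, \<theta>\<^sub>2)\<close> of \<open>gc_nat_trans\<close>
  is recovered as \<open>(\<theta> \<circ> tgt, \<theta> \<circ> src)\<close>.\<close>
definition gc_natural :: "'a gcat \<Rightarrow> 'b gcat \<Rightarrow> ('a \<Rightarrow> 'b) \<Rightarrow> ('a \<Rightarrow> 'b)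
    \<Rightarrow> ('a \<Rightarrow> 'b) \<Rightarrow> bool" where
  "gc_natural C D F G \<theta> \<longleftrightarrow>
    (\<forall>x\<in>gc_carrier C. \<theta> x \<in> gc_hom D (F x) (G x)) \<and>
    (\<forall>a\<in>gc_carrier C. gc_comp D (\<theta> (gc_tgt C a)) (F a) = gc_comp D (G a) (\<theta> (gc_src C a)))"

lemma gc_nat_trans_natural:
  assumes C: "gen_cat C" and D: "gen_cat D" and F: "gc_functor C D F" and G: "gc_functor C D G"
    and \<theta>: "gc_nat_trans C D F G \<theta>1 \<theta>2"
  shows "gc_natural C D F G (gc_nt_val C \<theta>1)"
proof -
  have square: "\<theta>1 a \<in> gc_carrier D" "\<theta>2 a \<in> gc_carrier D"
    "gc_defd D (\<theta>1 a) (F a)" "gc_defd D (G a) (\<theta>2 a)"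
    "gc_comp D (\<theta>1 a) (F a) = gc_comp D (G a) (\<theta>2 a)"
    if "a \<in> gc_carrier C" for a
    using \<theta> that unfolding gc_nat_trans_def by blast+
  have \<theta>1_tgt: "\<theta>1 a = \<theta>1 b"
    if "a \<in> gc_carrier C" "b \<in> gc_carrier C" "gc_tgt C a = gc_tgt C b" for a b
    using \<theta> that unfolding gc_nat_trans_def by blast
  have \<theta>2_src: "\<theta>2 a = \<theta>2 b"
    if "a \<in> gc_carrier C" "b \<in> gc_carrier C" "gc_src C a = gc_src C b" for a b
    using \<theta> that unfolding gc_nat_trans_def by blast
  have component: "\<theta>1 (gc_ident C x) = \<theta>2 (gc_ident C x) \<and>
      \<theta>1 (gc_ident C x) \<in> gc_hom D (F x) (G x)" if x: "x \<in> gc_carrier C" for x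
  proof -
    let ?i = "gc_ident C x"
    have i: "?i \<in> gc_hom C x x" using gc_ident_hom[OF C x] .
    have Fx: "F x \<in> gc_carrier D" and Gx: "G x \<in> gc_carrier D"
      using gc_functor_closed[OF F x] gc_functor_closed[OF G x] .
    note sq = square[OF gc_homD(1)[OF i],
        unfolded gc_functor_ident[OF F x] gc_functor_ident[OF G x]]
    \<comment> \<open>at an identity both sides of the naturality square collapse to a single component\<close>
    have "\<theta>1 ?i = gc_comp D (\<theta>1 ?i) (gc_ident D (F x))"
      using gc_comp_ident_right[OF D Fx sq(1,3)] by simp
    also have "\<dots> = gc_comp D (gc_ident D (G x)) (\<theta>2 ?i)" using sq(5) .
    also have "\<dots> = \<theta>2 ?i" using gc_comp_ident_left[OF D Gx sq(2,4)] .
    finally have eq: "\<theta>1 ?i = \<theta>2 ?i" .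
    have "gc_src D (\<theta>1 ?i) = F x"
      using gc_src_comp[OF D sq(1) _ sq(3)] gc_comp_ident_right[OF D Fx sq(1,3)]
        gc_homD[OF gc_ident_hom[OF D Fx]] by simp
    moreover have "gc_tgt D (\<theta>1 ?i) = G x"
      using gc_tgt_comp[OF D _ sq(2,4)] gc_comp_ident_left[OF D Gx sq(2,4)]
        gc_homD[OF gc_ident_hom[OF D Gx]] eq by simp
    ultimately show ?thesis using eq sq(1) by (simp add: gc_hom_def)
  qed
  show ?thesis unfolding gc_natural_def gc_nt_val_def
  proof (intro conjI ballI)
    fix x assume "x \<in> gc_carrier C"
    then show "\<theta>1 (gc_ident C x) \<in> gc_hom D (F x) (G x)" using component by blast
  next
    fix a assume a: "a \<in> gc_carrier C"
    have s: "gc_src C a \<in> gc_carrier C" and t: "gc_tgt C a \<in> gc_carrier C"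
      using gc_src_closed[OF C a] gc_tgt_closed[OF C a] .
    have "\<theta>1 a = \<theta>1 (gc_ident C (gc_tgt C a))"
      using \<theta>1_tgt[OF a gc_homD(1)[OF gc_ident_hom[OF C t]]] gc_homD(3)[OF gc_ident_hom[OF C t]]
      by simp
    moreover have "\<theta>2 a = \<theta>1 (gc_ident C (gc_src C a))"
      using \<theta>2_src[OF a gc_homD(1)[OF gc_ident_hom[OF C s]]] gc_homD(2)[OF gc_ident_hom[OF C s]]
        component[OF s] by simp
    ultimately show "gc_comp D (\<theta>1 (gc_ident C (gc_tgt C a))) (F a) =
        gc_comp D (G a) (\<theta>1 (gc_ident C (gc_src C a)))"
      using square(5)[OF a] by simp
  qed
qed

lemma gc_natural_nat_trans:
  assumes C: "gen_cat C" and D: "gen_cat D" and F: "gc_functor C D F" and G: "gc_functor C D G"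
    and \<theta>: "gc_natural C D F G \<theta>"
  shows "gc_nat_trans C D F G (\<lambda>a. \<theta> (gc_tgt C a)) (\<lambda>a. \<theta> (gc_src C a))"
  unfolding gc_nat_trans_def
proof (intro conjI ballI impI)
  fix a assume a: "a \<in> gc_carrier C"
  have \<theta>s: "\<theta> (gc_src C a) \<in> gc_hom D (F (gc_src C a)) (G (gc_src C a))"
    and \<theta>t: "\<theta> (gc_tgt C a) \<in> gc_hom D (F (gc_tgt C a)) (G (gc_tgt C a))"
    using \<theta> gc_src_closed[OF C a] gc_tgt_closed[OF C a] unfolding gc_natural_def by blast+
  have Fa: "F a \<in> gc_hom D (F (gc_src C a)) (F (gc_tgt C a))"
    and Ga: "G a \<in> gc_hom D (G (gc_src C a)) (G (gc_tgt C a))"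
    using gc_functor_hom[OF F gc_hom_src_tgt[OF a]] gc_functor_hom[OF G gc_hom_src_tgt[OF a]] .
  show "\<theta> (gc_tgt C a) \<in> gc_carrier D" "\<theta> (gc_src C a) \<in> gc_carrier D"
    using gc_homD(1)[OF \<theta>t] gc_homD(1)[OF \<theta>s] .
  show "gc_defd D (\<theta> (gc_tgt C a)) (F a)" using gc_defd_hom[OF D \<theta>t Fa] .
  show "gc_defd D (G a) (\<theta> (gc_src C a))" using gc_defd_hom[OF D Ga \<theta>s] .
  show "gc_comp D (\<theta> (gc_tgt C a)) (F a) = gc_comp D (G a) (\<theta> (gc_src C a))"
    using \<theta> a unfolding gc_natural_def by blast
qed simp_all

lemma gc_nt_val_tgt: "gen_cat C \<Longrightarrow> x \<in> gc_carrier C \<Longrightarrow> gc_nt_val C (\<lambda>a. \<theta> (gc_tgt C a)) x = \<theta> x"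
  unfolding gc_nt_val_def using gc_homD(3)[OF gc_ident_hom, of C x] by simp

definition gc_adjunction :: "'a gcat \<Rightarrow> 'b gcat \<Rightarrow> ('a \<Rightarrow> 'b) \<Rightarrow> ('b \<Rightarrow> 'a)
    \<Rightarrow> ('a \<Rightarrow> 'a) \<Rightarrow> ('b \<Rightarrow> 'b) \<Rightarrow> bool" where
  "gc_adjunction C D F G \<eta> \<epsilon> \<longleftrightarrow>
    gc_natural C C id (G \<circ> F) \<eta> \<and> gc_natural D D (F \<circ> G) id \<epsilon> \<and>
    (\<forall>y\<in>gc_carrier D. gc_comp C (G (\<epsilon> y)) (\<eta> (G y)) = gc_ident C (G y)) \<and>
    (\<forall>x\<in>gc_carrier C. gc_comp D (\<epsilon> (F x)) (F (\<eta> x)) = gc_ident D (F x))"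

lemma gc_adjunctionI:
  assumes "\<And>x. x \<in> gc_carrier C \<Longrightarrow> \<eta> x \<in> gc_hom C x (G (F x))"
    and "\<And>v x x'. v \<in> gc_hom C x x' \<Longrightarrow> gc_comp C (\<eta> x') v = gc_comp C (G (F v)) (\<eta> x)"
    and "\<And>y. y \<in> gc_carrier D \<Longrightarrow> \<epsilon> y \<in> gc_hom D (F (G y)) y"
    and "\<And>u y y'. u \<in> gc_hom D y y' \<Longrightarrow> gc_comp D (\<epsilon> y') (F (G u)) = gc_comp D u (\<epsilon> y)"
    and "\<And>y. y \<in> gc_carrier D \<Longrightarrow> gc_comp C (G (\<epsilon> y)) (\<eta> (G y)) = gc_ident C (G y)"
    and "\<And>x. x \<in> gc_carrier C \<Longrightarrow> gc_comp D (\<epsilon> (F x)) (F (\<eta> x)) = gc_ident D (F x)"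
  shows "gc_adjunction C D F G \<eta> \<epsilon>"
  unfolding gc_adjunction_def gc_natural_def
  using assms(2)[OF gc_hom_src_tgt] assms(4)[OF gc_hom_src_tgt] by (simp add: assms(1,3,5,6))

lemma
  assumes "gc_adjunction C D F G \<eta> \<epsilon>"
  shows gc_adjunction_unit_hom: "x \<in> gc_carrier C \<Longrightarrow> \<eta> x \<in> gc_hom C x (G (F x))"
    and gc_adjunction_unit_natural:
      "v \<in> gc_hom C x x' \<Longrightarrow> gc_comp C (\<eta> x') v = gc_comp C (G (F v)) (\<eta> x)"
    and gc_adjunction_counit_hom: "y \<in> gc_carrier D \<Longrightarrow> \<epsilon> y \<in> gc_hom D (F (G y)) y"
    and gc_adjunction_counit_natural:
      "u \<in> gc_hom D y y' \<Longrightarrow> gc_comp D (\<epsilon> y') (F (G u)) = gc_comp D u (\<epsilon> y)"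
    and gc_adjunction_triangle_G:
      "y \<in> gc_carrier D \<Longrightarrow> gc_comp C (G (\<epsilon> y)) (\<eta> (G y)) = gc_ident C (G y)"
    and gc_adjunction_triangle_F:
      "x \<in> gc_carrier C \<Longrightarrow> gc_comp D (\<epsilon> (F x)) (F (\<eta> x)) = gc_ident D (F x)"
  using assms unfolding gc_adjunction_def gc_natural_def gc_hom_def by auto

lemma gc_nat_trans_adjunction_iff:
  fixes C :: "'a gcat" and D :: "'b gcat" and F :: "'a \<Rightarrow> 'b" and G :: "'b \<Rightarrow> 'a"
  assumes C: "gen_cat C" and D: "gen_cat D" and F: "gc_functor C D F" and G: "gc_functor D C G"
  shows "(\<exists>\<eta>1 \<eta>2 \<epsilon>1 \<epsilon>2.
            gc_nat_trans C C id (G \<circ> F) \<eta>1 \<eta>2 \<and>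
            gc_nat_trans D D (F \<circ> G) id \<epsilon>1 \<epsilon>2 \<and>
            (\<forall>y\<in>gc_carrier D.
               gc_defd C (G (gc_nt_val D \<epsilon>1 y)) (gc_nt_val C \<eta>1 (G y)) \<and>
               gc_comp C (G (gc_nt_val D \<epsilon>1 y)) (gc_nt_val C \<eta>1 (G y)) = gc_ident C (G y)) \<and>
            (\<forall>x\<in>gc_carrier C.
               gc_defd D (gc_nt_val D \<epsilon>1 (F x)) (F (gc_nt_val C \<eta>1 x)) \<and>
               gc_comp D (gc_nt_val D \<epsilon>1 (F x)) (F (gc_nt_val C \<eta>1 x)) = gc_ident D (F x)))
     \<longleftrightarrow> (\<exists>\<eta> \<epsilon>. gc_adjunction C D F G \<eta> \<epsilon>)"
    (is "?nat_trans \<longleftrightarrow> _")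
proof
  have GF: "gc_functor C C (G \<circ> F)" and FG: "gc_functor D D (F \<circ> G)"
    using gc_functor_compose[OF C F G] gc_functor_compose[OF D G F] .
  assume ?nat_trans
  then obtain \<eta>1 \<eta>2 \<epsilon>1 \<epsilon>2 where
    \<eta>: "gc_nat_trans C C id (G \<circ> F) \<eta>1 \<eta>2" and \<epsilon>: "gc_nat_trans D D (F \<circ> G) id \<epsilon>1 \<epsilon>2" and
    triangles: "\<forall>y\<in>gc_carrier D. gc_comp C (G (gc_nt_val D \<epsilon>1 y)) (gc_nt_val C \<eta>1 (G y)) = gc_ident C (G y)"
      "\<forall>x\<in>gc_carrier C. gc_comp D (gc_nt_val D \<epsilon>1 (F x)) (F (gc_nt_val C \<eta>1 x)) = gc_ident D (F x)"
    by blast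
  have "gc_adjunction C D F G (gc_nt_val C \<eta>1) (gc_nt_val D \<epsilon>1)"
    unfolding gc_adjunction_def
    using gc_nat_trans_natural[OF C C gc_functor_id GF \<eta>] gc_nat_trans_natural[OF D D FG gc_functor_id \<epsilon>]
      triangles by blast
  then show "\<exists>\<eta> \<epsilon>. gc_adjunction C D F G \<eta> \<epsilon>" by blast
next
  have GF: "gc_functor C C (G \<circ> F)" and FG: "gc_functor D D (F \<circ> G)"
    using gc_functor_compose[OF C F G] gc_functor_compose[OF D G F] .
  assume "\<exists>\<eta> \<epsilon>. gc_adjunction C D F G \<eta> \<epsilon>"
  then obtain \<eta> \<epsilon> where adj: "gc_adjunction C D F G \<eta> \<epsilon>" by blast
  have \<eta>: "gc_natural C C id (G \<circ> F) \<eta>" and \<epsilon>: "gc_natural D D (F \<circ> G) id \<epsilon>"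
    using adj unfolding gc_adjunction_def by blast+
  have val_\<eta>: "gc_nt_val C (\<lambda>a. \<eta> (gc_tgt C a)) x = \<eta> x" if "x \<in> gc_carrier C" for x
    using gc_nt_val_tgt[OF C that] .
  have val_\<epsilon>: "gc_nt_val D (\<lambda>a. \<epsilon> (gc_tgt D a)) y = \<epsilon> y" if "y \<in> gc_carrier D" for y
    using gc_nt_val_tgt[OF D that] .
  have triangle_G: "gc_defd C (G (\<epsilon> y)) (\<eta> (G y)) \<and> gc_comp C (G (\<epsilon> y)) (\<eta> (G y)) = gc_ident C (G y)"
    if y: "y \<in> gc_carrier D" for y
    using gc_defd_hom[OF C gc_functor_hom[OF G gc_adjunction_counit_hom[OF adj y]]
        gc_adjunction_unit_hom[OF adj gc_functor_closed[OF G y]]]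
      gc_adjunction_triangle_G[OF adj y] by blast
  have triangle_F: "gc_defd D (\<epsilon> (F x)) (F (\<eta> x)) \<and> gc_comp D (\<epsilon> (F x)) (F (\<eta> x)) = gc_ident D (F x)"
    if x: "x \<in> gc_carrier C" for x
    using gc_defd_hom[OF D gc_adjunction_counit_hom[OF adj gc_functor_closed[OF F x]]
        gc_functor_hom[OF F gc_adjunction_unit_hom[OF adj x]]]
      gc_adjunction_triangle_F[OF adj x] by blast
  show ?nat_trans
  proof (intro exI conjI ballI)
    show "gc_nat_trans C C id (G \<circ> F) (\<lambda>a. \<eta> (gc_tgt C a)) (\<lambda>a. \<eta> (gc_src C a))"
      using gc_natural_nat_trans[OF C C gc_functor_id GF \<eta>] .
    show "gc_nat_trans D D (F \<circ> G) id (\<lambda>a. \<epsilon> (gc_tgt D a)) (\<lambda>a. \<epsilon> (gc_src D a))"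
      using gc_natural_nat_trans[OF D D FG gc_functor_id \<epsilon>] .
  qed (use triangle_G triangle_F gc_functor_closed[OF F] gc_functor_closed[OF G] in
       \<open>simp_all add: val_\<eta> val_\<epsilon>\<close>)
qed

definition gc_hom_adjunction :: "'a gcat \<Rightarrow> 'b gcat \<Rightarrow> ('a \<Rightarrow> 'b) \<Rightarrow> ('b \<Rightarrow> 'a)
    \<Rightarrow> ('a \<Rightarrow> 'b \<Rightarrow> 'b \<Rightarrow> 'a) \<Rightarrow> bool" where
  "gc_hom_adjunction C D F G \<phi> \<longleftrightarrow>
    (\<forall>f\<in>gc_carrier C. \<forall>g\<in>gc_carrier D.
       bij_betw (\<phi> f g) (gc_hom D (F f) g) (gc_hom C f (G g))) \<and>
    (\<forall>f\<in>gc_carrier C. \<forall>f'\<in>gc_carrier C. \<forall>g\<in>gc_carrier D.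
       \<forall>v\<in>gc_hom C f f'. \<forall>u\<in>gc_hom D (F f') g.
         gc_defd D u (F v) \<longrightarrow> \<phi> f g (gc_comp D u (F v)) = gc_comp C (\<phi> f' g u) v) \<and>
    (\<forall>f\<in>gc_carrier C. \<forall>g\<in>gc_carrier D. \<forall>g'\<in>gc_carrier D.
       \<forall>v\<in>gc_hom D (F f) g. \<forall>v'\<in>gc_hom D g g'.
         gc_defd D v' v \<longrightarrow> \<phi> f g' (gc_comp D v' v) = gc_comp C (G v') (\<phi> f g v))"

context
  fixes C :: "'a gcat" and D :: "'b gcat" and F :: "'a \<Rightarrow> 'b" and G :: "'b \<Rightarrow> 'a"
    and \<eta> :: "'a \<Rightarrow> 'a" and \<epsilon> :: "'b \<Rightarrow> 'b"
  assumes C: "gen_cat C" and D: "gen_cat D" and F: "gc_functor C D F" and G: "gc_functor D C G"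
    and adj: "gc_adjunction C D F G \<eta> \<epsilon>"
begin

lemma gc_adjunction_counit_transpose:
  assumes f: "f \<in> gc_carrier C" and u: "u \<in> gc_hom D (F f) g"
  shows "gc_comp D (\<epsilon> g) (F (gc_comp C (G u) (\<eta> f))) = u"
proof -
  have g: "g \<in> gc_carrier D" using gc_tgt_closed[OF D gc_homD(1)[OF u]] gc_homD(3)[OF u] by simp
  note \<eta>f = gc_adjunction_unit_hom[OF adj f] and \<epsilon>g = gc_adjunction_counit_hom[OF adj g]
  note Gu = gc_functor_hom[OF G u]
  have "gc_comp D (\<epsilon> g) (F (gc_comp C (G u) (\<eta> f))) =
      gc_comp D (gc_comp D (\<epsilon> g) (F (G u))) (F (\<eta> f))"
    using gc_functor_comp_hom[OF C F Gu \<eta>f]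
      gc_comp_assoc_hom[OF D \<epsilon>g gc_functor_hom[OF F Gu] gc_functor_hom[OF F \<eta>f]] by simp
  also have "\<dots> = gc_comp D u (gc_comp D (\<epsilon> (F f)) (F (\<eta> f)))"
    using gc_adjunction_counit_natural[OF adj u] gc_comp_assoc_hom[OF D u
        gc_adjunction_counit_hom[OF adj gc_functor_closed[OF F f]] gc_functor_hom[OF F \<eta>f]]
    by simp
  also have "\<dots> = u"
    using gc_adjunction_triangle_F[OF adj f] gc_comp_ident_hom_right[OF D u] by simp
  finally show ?thesis .
qed

lemma gc_adjunction_unit_transpose:
  assumes g: "g \<in> gc_carrier D" and w: "w \<in> gc_hom C f (G g)"
  shows "gc_comp C (G (gc_comp D (\<epsilon> g) (F w))) (\<eta> f) = w"
proof -
  have f: "f \<in> gc_carrier C" using gc_src_closed[OF C gc_homD(1)[OF w]] gc_homD(2)[OF w] by simp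
  note \<eta>f = gc_adjunction_unit_hom[OF adj f] and \<epsilon>g = gc_adjunction_counit_hom[OF adj g]
  note Fw = gc_functor_hom[OF F w]
  have "gc_comp C (G (gc_comp D (\<epsilon> g) (F w))) (\<eta> f) =
      gc_comp C (G (\<epsilon> g)) (gc_comp C (G (F w)) (\<eta> f))"
    using gc_functor_comp_hom[OF D G \<epsilon>g Fw]
      gc_comp_assoc_hom[OF C gc_functor_hom[OF G \<epsilon>g] gc_functor_hom[OF G Fw] \<eta>f] by simp
  also have "\<dots> = gc_comp C (gc_comp C (G (\<epsilon> g)) (\<eta> (G g))) w"
    using gc_adjunction_unit_natural[OF adj w] gc_comp_assoc_hom[OF C gc_functor_hom[OF G \<epsilon>g]
        gc_adjunction_unit_hom[OF adj gc_functor_closed[OF G g]] w]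
    by simp
  also have "\<dots> = w"
    using gc_adjunction_triangle_G[OF adj g] gc_comp_ident_hom_left[OF C w] by simp
  finally show ?thesis .
qed

lemma gc_adjunction_transpose_bij:
  assumes f: "f \<in> gc_carrier C" and g: "g \<in> gc_carrier D"
  shows "bij_betw (\<lambda>u. gc_comp C (G u) (\<eta> f)) (gc_hom D (F f) g) (gc_hom C f (G g))"
proof (rule bij_betw_byWitness[where f' = "\<lambda>w. gc_comp D (\<epsilon> g) (F w)"])
  show "(\<lambda>u. gc_comp C (G u) (\<eta> f)) ` gc_hom D (F f) g \<subseteq> gc_hom C f (G g)"
    using gc_comp_hom[OF C gc_functor_hom[OF G] gc_adjunction_unit_hom[OF adj f]] by auto
  show "(\<lambda>w. gc_comp D (\<epsilon> g) (F w)) ` gc_hom C f (G g) \<subseteq> gc_hom D (F f) g"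
    using gc_comp_hom[OF D gc_adjunction_counit_hom[OF adj g] gc_functor_hom[OF F]] by auto
qed (simp_all add: gc_adjunction_counit_transpose[OF f] gc_adjunction_unit_transpose[OF g])

lemma gc_adjunction_hom_adjunction:
  "gc_hom_adjunction C D F G (\<lambda>f g u. gc_comp C (G u) (\<eta> f))"
  unfolding gc_hom_adjunction_def
proof (intro conjI ballI impI)
  fix f g assume "f \<in> gc_carrier C" "g \<in> gc_carrier D"
  then show "bij_betw (\<lambda>u. gc_comp C (G u) (\<eta> f)) (gc_hom D (F f) g) (gc_hom C f (G g))"
    by (rule gc_adjunction_transpose_bij)
next
  fix f f' g v u
  assume f: "f \<in> gc_carrier C" and f': "f' \<in> gc_carrier C"
    and v: "v \<in> gc_hom C f f'" and u: "u \<in> gc_hom D (F f') g"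
  note Fv = gc_functor_hom[OF F v] and Gu = gc_functor_hom[OF G u]
  have "gc_comp C (G (gc_comp D u (F v))) (\<eta> f) = gc_comp C (G u) (gc_comp C (G (F v)) (\<eta> f))"
    using gc_functor_comp_hom[OF D G u Fv] gc_comp_assoc_hom[OF C Gu gc_functor_hom[OF G Fv]
        gc_adjunction_unit_hom[OF adj f]] by simp
  also have "\<dots> = gc_comp C (gc_comp C (G u) (\<eta> f')) v"
    using gc_adjunction_unit_natural[OF adj v]
      gc_comp_assoc_hom[OF C Gu gc_adjunction_unit_hom[OF adj f'] v] by simp
  finally show "gc_comp C (G (gc_comp D u (F v))) (\<eta> f) = gc_comp C (gc_comp C (G u) (\<eta> f')) v" .
next
  fix f g g' v v'
  assume f: "f \<in> gc_carrier C" and v: "v \<in> gc_hom D (F f) g" and v': "v' \<in> gc_hom D g g'"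
  show "gc_comp C (G (gc_comp D v' v)) (\<eta> f) = gc_comp C (G v') (gc_comp C (G v) (\<eta> f))"
    using gc_functor_comp_hom[OF D G v' v] gc_comp_assoc_hom[OF C gc_functor_hom[OF G v']
        gc_functor_hom[OF G v] gc_adjunction_unit_hom[OF adj f]] by simp
qed

end

definition gc_hom_adjunction_unit :: "'b gcat \<Rightarrow> ('a \<Rightarrow> 'b) \<Rightarrow> ('a \<Rightarrow> 'b \<Rightarrow> 'b \<Rightarrow> 'a)
    \<Rightarrow> 'a \<Rightarrow> 'a" where
  "gc_hom_adjunction_unit D F \<phi> x = \<phi> x (F x) (gc_ident D (F x))"

definition gc_hom_adjunction_counit :: "'a gcat \<Rightarrow> 'b gcat \<Rightarrow> ('a \<Rightarrow> 'b) \<Rightarrow> ('b \<Rightarrow> 'a)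
    \<Rightarrow> ('a \<Rightarrow> 'b \<Rightarrow> 'b \<Rightarrow> 'a) \<Rightarrow> 'b \<Rightarrow> 'b" where
  "gc_hom_adjunction_counit C D F G \<phi> y =
    inv_into (gc_hom D (F (G y)) y) (\<phi> (G y) y) (gc_ident C (G y))"

context
  fixes C :: "'a gcat" and D :: "'b gcat" and F :: "'a \<Rightarrow> 'b" and G :: "'b \<Rightarrow> 'a"
    and \<phi> :: "'a \<Rightarrow> 'b \<Rightarrow> 'b \<Rightarrow> 'a"
  assumes C: "gen_cat C" and D: "gen_cat D" and F: "gc_functor C D F" and G: "gc_functor D C G"
    and hom_adj: "gc_hom_adjunction C D F G \<phi>"
begin

lemma gc_hom_adjunction_bij:
  "f \<in> gc_carrier C \<Longrightarrow> g \<in> gc_carrier D \<Longrightarrow>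
    bij_betw (\<phi> f g) (gc_hom D (F f) g) (gc_hom C f (G g))"
  using hom_adj unfolding gc_hom_adjunction_def by blast

lemma gc_hom_adjunction_hom:
  "f \<in> gc_carrier C \<Longrightarrow> g \<in> gc_carrier D \<Longrightarrow> u \<in> gc_hom D (F f) g \<Longrightarrow> \<phi> f g u \<in> gc_hom C f (G g)"
  using gc_hom_adjunction_bij bij_betw_apply by metis

lemma gc_hom_adjunction_inj:
  "\<lbrakk>f \<in> gc_carrier C; g \<in> gc_carrier D; u \<in> gc_hom D (F f) g; u' \<in> gc_hom D (F f) g;
    \<phi> f g u = \<phi> f g u'\<rbrakk> \<Longrightarrow> u = u'"
  using gc_hom_adjunction_bij bij_betw_imp_inj_on inj_onD by metis

lemma gc_hom_adjunction_natural_left: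
  assumes "f \<in> gc_carrier C" "f' \<in> gc_carrier C" "g \<in> gc_carrier D"
    and "v \<in> gc_hom C f f'" "u \<in> gc_hom D (F f') g"
  shows "\<phi> f g (gc_comp D u (F v)) = gc_comp C (\<phi> f' g u) v"
  using hom_adj assms gc_defd_hom[OF D assms(5) gc_functor_hom[OF F assms(4)]]
  unfolding gc_hom_adjunction_def by blast

lemma gc_hom_adjunction_natural_right:
  assumes "f \<in> gc_carrier C" "g \<in> gc_carrier D" "g' \<in> gc_carrier D"
    and "v \<in> gc_hom D (F f) g" "v' \<in> gc_hom D g g'"
  shows "\<phi> f g' (gc_comp D v' v) = gc_comp C (G v') (\<phi> f g v)"
  using hom_adj assms gc_defd_hom[OF D assms(5,4)] unfolding gc_hom_adjunction_def by blast

lemma gc_hom_adjunction_unit_hom: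
  "x \<in> gc_carrier C \<Longrightarrow> gc_hom_adjunction_unit D F \<phi> x \<in> gc_hom C x (G (F x))"
  unfolding gc_hom_adjunction_unit_def
  using gc_hom_adjunction_hom gc_functor_closed[OF F] gc_ident_hom[OF D] by metis

lemma gc_hom_adjunction_transpose_eq:
  assumes f: "f \<in> gc_carrier C" and u: "u \<in> gc_hom D (F f) g"
  shows "\<phi> f g u = gc_comp C (G u) (gc_hom_adjunction_unit D F \<phi> f)"
proof -
  have Ff: "F f \<in> gc_carrier D" and g: "g \<in> gc_carrier D"
    using gc_functor_closed[OF F f] gc_tgt_closed[OF D gc_homD(1)[OF u]] gc_homD(3)[OF u] by simp_all
  have "\<phi> f g u = \<phi> f g (gc_comp D u (gc_ident D (F f)))"
    using gc_comp_ident_hom_right[OF D u] by simp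
  also have "\<dots> = gc_comp C (G u) (gc_hom_adjunction_unit D F \<phi> f)"
    unfolding gc_hom_adjunction_unit_def
    using gc_hom_adjunction_natural_right[OF f Ff g gc_ident_hom[OF D Ff] u] .
  finally show ?thesis .
qed

lemma gc_hom_adjunction_unit_natural:
  assumes v: "v \<in> gc_hom C x x'"
  shows "gc_comp C (gc_hom_adjunction_unit D F \<phi> x') v =
    gc_comp C (G (F v)) (gc_hom_adjunction_unit D F \<phi> x)"
proof -
  have x: "x \<in> gc_carrier C" and x': "x' \<in> gc_carrier C"
    using gc_src_closed[OF C gc_homD(1)[OF v]] gc_tgt_closed[OF C gc_homD(1)[OF v]] gc_homD[OF v]
    by simp_all
  note Fv = gc_functor_hom[OF F v] and Fx' = gc_functor_closed[OF F x']
  have "gc_comp C (gc_hom_adjunction_unit D F \<phi> x') v =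
      \<phi> x (F x') (gc_comp D (gc_ident D (F x')) (F v))"
    unfolding gc_hom_adjunction_unit_def
    using gc_hom_adjunction_natural_left[OF x x' Fx' v gc_ident_hom[OF D Fx']] by simp
  also have "\<dots> = gc_comp C (G (F v)) (gc_hom_adjunction_unit D F \<phi> x)"
    using gc_comp_ident_hom_left[OF D Fv] gc_hom_adjunction_transpose_eq[OF x Fv] by simp
  finally show ?thesis .
qed

lemma
  assumes y: "y \<in> gc_carrier D"
  shows gc_hom_adjunction_counit_hom: "gc_hom_adjunction_counit C D F G \<phi> y \<in> gc_hom D (F (G y)) y"
    and gc_hom_adjunction_counit_transpose:
      "\<phi> (G y) y (gc_hom_adjunction_counit C D F G \<phi> y) = gc_ident C (G y)"
proof -
  have Gy: "G y \<in> gc_carrier C" using gc_functor_closed[OF G y] .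
  have "gc_ident C (G y) \<in> \<phi> (G y) y ` gc_hom D (F (G y)) y"
    using gc_hom_adjunction_bij[OF Gy y] gc_ident_hom[OF C Gy] unfolding bij_betw_def by simp
  then show "gc_hom_adjunction_counit C D F G \<phi> y \<in> gc_hom D (F (G y)) y"
    and "\<phi> (G y) y (gc_hom_adjunction_counit C D F G \<phi> y) = gc_ident C (G y)"
    unfolding gc_hom_adjunction_counit_def by (rule inv_into_into, rule f_inv_into_f)
qed

lemma gc_hom_adjunction_counit_natural:
  assumes u: "u \<in> gc_hom D y y'"
  shows "gc_comp D (gc_hom_adjunction_counit C D F G \<phi> y') (F (G u)) =
    gc_comp D u (gc_hom_adjunction_counit C D F G \<phi> y)"
    (is "gc_comp D (?\<epsilon> y') _ = gc_comp D u (?\<epsilon> y)")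
proof -
  have y: "y \<in> gc_carrier D" and y': "y' \<in> gc_carrier D"
    using gc_src_closed[OF D gc_homD(1)[OF u]] gc_tgt_closed[OF D gc_homD(1)[OF u]] gc_homD[OF u]
    by simp_all
  note Gu = gc_functor_hom[OF G u]
  have Gy: "G y \<in> gc_carrier C" and Gy': "G y' \<in> gc_carrier C"
    using gc_functor_closed[OF G y] gc_functor_closed[OF G y'] .
  \<comment> \<open>both sides transpose to \<open>G u\<close>\<close>
  have "\<phi> (G y) y' (gc_comp D (?\<epsilon> y') (F (G u))) = G u"
    using gc_hom_adjunction_natural_left[OF Gy Gy' y' Gu gc_hom_adjunction_counit_hom[OF y']]
      gc_hom_adjunction_counit_transpose[OF y'] gc_comp_ident_hom_left[OF C Gu] by simp
  moreover have "\<phi> (G y) y' (gc_comp D u (?\<epsilon> y)) = G u"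
    using gc_hom_adjunction_natural_right[OF Gy y y' gc_hom_adjunction_counit_hom[OF y] u]
      gc_hom_adjunction_counit_transpose[OF y] gc_comp_ident_hom_right[OF C Gu] by simp
  ultimately show ?thesis
    using gc_hom_adjunction_inj[OF Gy y'] gc_hom_adjunction_counit_hom[OF y] gc_hom_adjunction_counit_hom[OF y']
      gc_comp_hom[OF D gc_hom_adjunction_counit_hom[OF y'] gc_functor_hom[OF F Gu]]
      gc_comp_hom[OF D u gc_hom_adjunction_counit_hom[OF y]] by metis
qed

lemma gc_hom_adjunction_adjunction:
  "gc_adjunction C D F G (gc_hom_adjunction_unit D F \<phi>) (gc_hom_adjunction_counit C D F G \<phi>)"
  (is "gc_adjunction C D F G ?\<eta> ?\<epsilon>")
proof (rule gc_adjunctionI)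
  fix y assume y: "y \<in> gc_carrier D"
  show "gc_comp C (G (?\<epsilon> y)) (?\<eta> (G y)) = gc_ident C (G y)"
    using gc_hom_adjunction_transpose_eq[OF gc_functor_closed[OF G y] gc_hom_adjunction_counit_hom[OF y]]
      gc_hom_adjunction_counit_transpose[OF y] by simp
next
  fix x assume x: "x \<in> gc_carrier C"
  have Fx: "F x \<in> gc_carrier D" using gc_functor_closed[OF F x] .
  note \<eta>x = gc_hom_adjunction_unit_hom[OF x] and \<epsilon>Fx = gc_hom_adjunction_counit_hom[OF Fx]
  \<comment> \<open>both sides transpose to the unit\<close>
  have "\<phi> x (F x) (gc_comp D (?\<epsilon> (F x)) (F (?\<eta> x))) = ?\<eta> x"
    using gc_hom_adjunction_natural_left[OF x gc_functor_closed[OF G Fx] Fx \<eta>x \<epsilon>Fx]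
      gc_hom_adjunction_counit_transpose[OF Fx] gc_comp_ident_hom_left[OF C \<eta>x] by simp
  then show "gc_comp D (?\<epsilon> (F x)) (F (?\<eta> x)) = gc_ident D (F x)"
    using gc_hom_adjunction_inj[OF x Fx] gc_comp_hom[OF D \<epsilon>Fx gc_functor_hom[OF F \<eta>x]]
      gc_ident_hom[OF D Fx] unfolding gc_hom_adjunction_unit_def by metis
qed (use gc_hom_adjunction_unit_hom gc_hom_adjunction_unit_natural gc_hom_adjunction_counit_hom
       gc_hom_adjunction_counit_natural in blast)+

end

theorem mainTheorem2:
  fixes C :: "'a gcat" and D :: "'b gcat" and F :: "'a \<Rightarrow> 'b" and G :: "'b \<Rightarrow> 'a"
  assumes "gen_cat C" and "gen_cat D"
    and "gc_functor C D F" and "gc_functor D C G"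
  shows "(\<exists>\<eta>1 \<eta>2 \<epsilon>1 \<epsilon>2.
            gc_nat_trans C C id (G \<circ> F) \<eta>1 \<eta>2 \<and>
            gc_nat_trans D D (F \<circ> G) id \<epsilon>1 \<epsilon>2 \<and>
            (\<forall>y\<in>gc_carrier D.
               gc_defd C (G (gc_nt_val D \<epsilon>1 y)) (gc_nt_val C \<eta>1 (G y)) \<and>
               gc_comp C (G (gc_nt_val D \<epsilon>1 y)) (gc_nt_val C \<eta>1 (G y)) = gc_ident C (G y)) \<and>
            (\<forall>x\<in>gc_carrier C.
               gc_defd D (gc_nt_val D \<epsilon>1 (F x)) (F (gc_nt_val C \<eta>1 x)) \<and>
               gc_comp D (gc_nt_val D \<epsilon>1 (F x)) (F (gc_nt_val C \<eta>1 x)) = gc_ident D (F x)))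
     \<longleftrightarrow>
         (\<exists>\<phi> :: 'a \<Rightarrow> 'b \<Rightarrow> 'b \<Rightarrow> 'a.
            (\<forall>f\<in>gc_carrier C. \<forall>g\<in>gc_carrier D.
               bij_betw (\<phi> f g) (gc_hom D (F f) g) (gc_hom C f (G g))) \<and>
            (\<forall>f\<in>gc_carrier C. \<forall>f'\<in>gc_carrier C. \<forall>g\<in>gc_carrier D.
               \<forall>v\<in>gc_hom C f f'. \<forall>u\<in>gc_hom D (F f') g.
                 gc_defd D u (F v) \<longrightarrow>
                 \<phi> f g (gc_comp D u (F v)) = gc_comp C (\<phi> f' g u) v) \<and>
            (\<forall>f\<in>gc_carrier C. \<forall>g\<in>gc_carrier D. \<forall>g'\<in>gc_carrier D.
               \<forall>v\<in>gc_hom D (F f) g. \<forall>v'\<in>gc_hom D g g'.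
                 gc_defd D v' v \<longrightarrow>
                 \<phi> f g' (gc_comp D v' v) = gc_comp C (G v') (\<phi> f g v)))"
proof -
  have "(\<exists>\<eta> \<epsilon>. gc_adjunction C D F G \<eta> \<epsilon>) \<longleftrightarrow> (\<exists>\<phi>. gc_hom_adjunction C D F G \<phi>)"
    using gc_adjunction_hom_adjunction[OF assms] gc_hom_adjunction_adjunction[OF assms] by blast
  with gc_nat_trans_adjunction_iff[OF assms] show ?thesis
    unfolding gc_hom_adjunction_def by (rule trans)
qed

end
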